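(* For any graph $G$ with no isolated vertex and any noncomplete graph $H$ with $\gamma(H)=1$, $\gamma_{(1,0,0)}^s(G\circ H)=\gamma_{(2,1,0)}(G)$.
   Context: All graphs are finite and simple; $\gamma(H)$ is the domination number; $N(v)$ is the open neighbourhood. For an integer $l\ge1$ and $w=(w_0,\dots,w_l)$ with $w_0\ge1$, $w_i\ge0$ integers, a function $f:V(G)\to\{0,\dots,l\}$ is a $w$-dominating function if $\sum_{u\in N(v)}f(u)\ge w_i$ for every vertex $v$ with $f(v)=i$; its weight is $\sum_v f(v)$, and $\gamma_w(G)$ is the minimum weight of a $w$-dominating function. For adjacent $v,u$ with $f(v)=0$, $f(u)>0$, $f_{u\to v}$ is defined by $f_{u\to v}(v)=1$, $f_{u\to v}(u)=f(u)-1$, $f_{u\to v}(x)=f(x)$ otherwise. A $w$-dominating $f$ is secure if for every $v$ with $f(v)=0$ there is $u\in N(v)$ with $f(u)>0$ such that $f_{u\to v}$ is $w$-dominating; $\gamma_w^s(G)$ is the minimum weight of a secure $w$-dominating function. The lexicographic product $G\circ H$ has vertex set $V(G)\times V(H)$, with $(u,v)(x,y)$ an edge iff $ux\in E(G)$, or $u=x$ and $vy\in E(H)$. *)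

theory Defs
  imports Main
begin

definition graph :: "'a set \<Rightarrow> ('a \<Rightarrow> 'a \<Rightarrow> bool) \<Rightarrow> bool" where
  "graph V E \<longleftrightarrow> finite V \<and> (\<forall>u v. E u v \<longrightarrow> u \<in> V \<and> v \<in> V)
     \<and> (\<forall>u v. E u v \<longrightarrow> E v u) \<and> (\<forall>v. \<not> E v v)"

definition nbhd :: "'a set \<Rightarrow> ('a \<Rightarrow> 'a \<Rightarrow> bool) \<Rightarrow> 'a \<Rightarrow> 'a set" where
  "nbhd V E v = {u \<in> V. E v u}"

definition no_isolated :: "'a set \<Rightarrow> ('a \<Rightarrow> 'a \<Rightarrow> bool) \<Rightarrow> bool" where
  "no_isolated V E \<longleftrightarrow> (\<forall>v\<in>V. nbhd V E v \<noteq> {})"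

definition complete_graph :: "'a set \<Rightarrow> ('a \<Rightarrow> 'a \<Rightarrow> bool) \<Rightarrow> bool" where
  "complete_graph V E \<longleftrightarrow> (\<forall>u\<in>V. \<forall>v\<in>V. u \<noteq> v \<longrightarrow> E u v)"

definition dominating_set :: "'a set \<Rightarrow> ('a \<Rightarrow> 'a \<Rightarrow> bool) \<Rightarrow> 'a set \<Rightarrow> bool" where
  "dominating_set V E S \<longleftrightarrow> S \<subseteq> V \<and> (\<forall>v\<in>V - S. \<exists>u\<in>S. E v u)"

definition domination_number :: "'a set \<Rightarrow> ('a \<Rightarrow> 'a \<Rightarrow> bool) \<Rightarrow> nat" where
  "domination_number V E = (LEAST n. \<exists>S. dominating_set V E S \<and> card S = n)"

definition lex_edges :: "('a \<Rightarrow> 'a \<Rightarrow> bool) \<Rightarrow> ('b \<Rightarrow> 'b \<Rightarrow> bool)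
    \<Rightarrow> ('a \<times> 'b) \<Rightarrow> ('a \<times> 'b) \<Rightarrow> bool" where
  "lex_edges E F p q \<longleftrightarrow> E (fst p) (fst q) \<or> (fst p = fst q \<and> F (snd p) (snd q))"

text \<open>The weight vector w = (w_0,...,w_l) is a list of length l+1, so l = length w - 1.
  A w-dominating function takes values in {0..l} on V.\<close>
definition w_dominating :: "'a set \<Rightarrow> ('a \<Rightarrow> 'a \<Rightarrow> bool) \<Rightarrow> nat list \<Rightarrow> ('a \<Rightarrow> nat) \<Rightarrow> bool" where
  "w_dominating V E w f \<longleftrightarrow>
     (\<forall>v\<in>V. f v \<le> length w - 1) \<and>
     (\<forall>v\<in>V. w ! (f v) \<le> (\<Sum>u\<in>nbhd V E v. f u))"

definition weight :: "'a set \<Rightarrow> ('a \<Rightarrow> nat) \<Rightarrow> nat" where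
  "weight V f = (\<Sum>v\<in>V. f v)"

definition w_domination_number :: "'a set \<Rightarrow> ('a \<Rightarrow> 'a \<Rightarrow> bool) \<Rightarrow> nat list \<Rightarrow> nat" where
  "w_domination_number V E w = (LEAST n. \<exists>f. w_dominating V E w f \<and> weight V f = n)"

definition move :: "('a \<Rightarrow> nat) \<Rightarrow> 'a \<Rightarrow> 'a \<Rightarrow> 'a \<Rightarrow> nat" where
  "move f u v = (f(u := f u - 1))(v := 1)"

definition secure_w_dominating :: "'a set \<Rightarrow> ('a \<Rightarrow> 'a \<Rightarrow> bool) \<Rightarrow> nat list \<Rightarrow> ('a \<Rightarrow> nat) \<Rightarrow> bool" where
  "secure_w_dominating V E w f \<longleftrightarrow> w_dominating V E w f \<and>
     (\<forall>v\<in>V. f v = 0 \<longrightarrow> (\<exists>u\<in>nbhd V E v. f u > 0 \<and> w_dominating V E w (move f u v)))"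

definition secure_w_domination_number :: "'a set \<Rightarrow> ('a \<Rightarrow> 'a \<Rightarrow> bool) \<Rightarrow> nat list \<Rightarrow> nat" where
  "secure_w_domination_number V E w =
     (LEAST n. \<exists>f. secure_w_dominating V E w f \<and> weight V f = n)"

end

theory Submission
  imports Defs
begin

(* Upper bound: let h be a universal vertex of H. Placing a (2,1,0)-dominating function f of G
   on the layer V x {h} gives a (1,0,0)-dominating function of G o H of the same weight, and it
   is secure: after moving a unit away from (u,h) the new function still lies above the lift of
   f with one unit removed at u, and removing one unit from a (2,1,0)-dominating function leaves
   a (1,0,0)-dominating one.
   Lower bound: a secure (1,0,0)-dominating g collapses to f x = min 2 (sum of g over the fibre
   of x), which has weight at most that of g. If f x = 0, the defence of (x,a) uses a unit from
   a neighbouring fibre; were it the only unit in the fibres around x, the move would leave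
   (x,b) undominated, for any b not adjacent to a. If f x = 1 and the neighbouring fibres are
   empty, defending every vertex of the fibre of x from inside that fibre forces H to be
   complete. *)

lemma sum_le_1_imp_unique:
  fixes f :: "'a \<Rightarrow> nat"
  assumes "finite A" "a \<in> A" "0 < f a" "sum f A \<le> 1"
  shows "f a = 1 \<and> (\<forall>b\<in>A. b \<noteq> a \<longrightarrow> f b = 0)"
proof -
  have "f a \<le> sum f A"
    by (rule member_le_sum) (use assms in auto)
  then have "sum f A = 1"
    using assms(3,4) by linarith
  then obtain a' where "a' \<in> A" "f a' = 1" "\<forall>b\<in>A. a' \<noteq> b \<longrightarrow> f b = 0"
    using sum_eq_1_iff[OF assms(1)] by blast
  then show ?thesis
    using assms(2,3) by (metis less_irrefl)
qed

lemma sum_le_sum_decrement_plus_1: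
  fixes f :: "'a \<Rightarrow> nat"
  assumes "finite A"
  shows "sum f A \<le> sum (f(u := f u - 1)) A + 1"
proof (cases "u \<in> A")
  case True
  then show ?thesis
    using assms by (simp add: sum.remove)
next
  case False
  then have "sum (f(u := f u - 1)) A = sum f A"
    by (intro sum.cong) auto
  then show ?thesis
    by simp
qed

lemma Least_weight_eq_if_mutually_bounded:
  fixes wP :: "'x \<Rightarrow> nat" and wQ :: "'y \<Rightarrow> nat"
  assumes "P x0"
    and P_to_Q: "\<And>x. P x \<Longrightarrow> \<exists>y. Q y \<and> wQ y \<le> wP x"
    and Q_to_P: "\<And>y. Q y \<Longrightarrow> \<exists>x. P x \<and> wP x \<le> wQ y"
  shows "(LEAST n. \<exists>x. P x \<and> wP x = n) = (LEAST n. \<exists>y. Q y \<and> wQ y = n)"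
proof -
  have Least_le_bound: "(LEAST n. \<exists>x. R x \<and> w x = n) \<le> m" if "R x" "w x \<le> m"
    for R and w :: "'z \<Rightarrow> nat" and x m
    using that by (metis (mono_tags, lifting) Least_le le_trans)
  have attained: "\<exists>x. R x \<and> w x = (LEAST n. \<exists>x. R x \<and> w x = n)" if "R x"
    for R and w :: "'z \<Rightarrow> nat" and x
    using that LeastI_ex[of "\<lambda>n. \<exists>x. R x \<and> w x = n"] by blast
  obtain x where x: "P x" "wP x = (LEAST n. \<exists>x. P x \<and> wP x = n)"
    using attained[of P, OF assms(1)] by blast
  then obtain y where y: "Q y" "wQ y \<le> wP x"
    using P_to_Q by blast
  obtain y' where y': "Q y'" "wQ y' = (LEAST n. \<exists>y. Q y \<and> wQ y = n)"
    using attained[of Q, OF y(1)] by blast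
  then obtain x' where x': "P x'" "wP x' \<le> wQ y'"
    using Q_to_P by blast
  show ?thesis
    using Least_le_bound[of Q y wQ, OF y] Least_le_bound[of P x' wP, OF x'] x(2) y'(2)
    by linarith
qed

lemma domination_number_eq_1_imp_universal:
  assumes "domination_number W F = 1"
  shows "\<exists>h\<in>W. \<forall>y\<in>W. y \<noteq> h \<longrightarrow> F y h"
proof -
  have "\<exists>S. dominating_set W F S \<and> card S = card W"
    by (intro exI[of _ W]) (simp add: dominating_set_def)
  from LeastI[of "\<lambda>n. \<exists>S. dominating_set W F S \<and> card S = n", OF this]
  obtain S where "dominating_set W F S" "card S = 1"
    using assms unfolding domination_number_def by auto
  then show ?thesis
    by (auto simp: dominating_set_def card_1_singleton_iff)
qed

lemma w_dominating_1_0_0_iff: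
  assumes "finite V"
  shows "w_dominating V E [1,0,0] f \<longleftrightarrow>
    (\<forall>v\<in>V. f v \<le> 2) \<and> (\<forall>v\<in>V. f v = 0 \<longrightarrow> (\<exists>u\<in>nbhd V E v. 0 < f u))"
proof -
  have pos: "0 < sum f (nbhd V E v) \<longleftrightarrow> (\<exists>u\<in>nbhd V E v. 0 < f u)" for v
  proof -
    have "finite (nbhd V E v)"
      using assms by (simp add: nbhd_def)
    then show ?thesis
      by (simp add: sum_eq_0_iff flip: neq0_conv)
  qed
  have "[1,0,0] ! f v \<le> sum f (nbhd V E v) \<longleftrightarrow> (f v = 0 \<longrightarrow> (\<exists>u\<in>nbhd V E v. 0 < f u))"
    if "f v \<le> 2" for v
  proof -
    have "f v \<in> {0, 1, 2}"
      using that by auto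
    then show ?thesis
      using pos[of v] by (auto simp: Suc_le_eq)
  qed
  moreover have "length [1,0,0::nat] - 1 = 2"
    by simp
  ultimately show ?thesis
    unfolding w_dominating_def by (metis (no_types, lifting))
qed

lemma w_dominating_2_1_0_iff:
  "w_dominating V E [2,1,0] f \<longleftrightarrow>
    (\<forall>v\<in>V. f v \<le> 2) \<and> (\<forall>v\<in>V. f v = 0 \<longrightarrow> 2 \<le> sum f (nbhd V E v))
      \<and> (\<forall>v\<in>V. f v = 1 \<longrightarrow> 1 \<le> sum f (nbhd V E v))"
proof -
  have "[2,1,0] ! f v \<le> s \<longleftrightarrow> (f v = 0 \<longrightarrow> 2 \<le> s) \<and> (f v = 1 \<longrightarrow> 1 \<le> s)"
    if "f v \<le> 2" for v and s :: nat
  proof -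
    have "f v \<in> {0, 1, 2}"
      using that by auto
    then show ?thesis
      by auto
  qed
  moreover have "length [2,1,0::nat] - 1 = 2"
    by simp
  ultimately show ?thesis
    unfolding w_dominating_def by (smt (verit))
qed

lemma w_dominating_1_0_0_mono:
  assumes "finite V" and "w_dominating V E [1,0,0] f"
    and "\<And>v. v \<in> V \<Longrightarrow> f v \<le> g v" and "\<And>v. v \<in> V \<Longrightarrow> g v \<le> 2"
  shows "w_dominating V E [1,0,0] g"
proof -
  have "\<exists>u\<in>nbhd V E v. 0 < g u" if v: "v \<in> V" "g v = 0" for v
  proof -
    have "f v = 0"
      using assms(3)[OF v(1)] v(2) by simp
    then obtain u where "u \<in> nbhd V E v" "0 < f u"
      using assms(2) v(1) unfolding w_dominating_1_0_0_iff[OF assms(1)] by blast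
    moreover have "u \<in> V"
      using \<open>u \<in> nbhd V E v\<close> by (simp add: nbhd_def)
    ultimately show ?thesis
      using assms(3) by (metis less_le_trans)
  qed
  then show ?thesis
    using assms(4) unfolding w_dominating_1_0_0_iff[OF assms(1)] by blast
qed

lemma w_dominating_2_1_0_imp_1_0_0:
  assumes "finite V" and "w_dominating V E [2,1,0] f"
  shows "w_dominating V E [1,0,0] f"
proof -
  have "\<exists>u\<in>nbhd V E v. 0 < f u" if "v \<in> V" "f v = 0" for v
  proof -
    have "finite (nbhd V E v)"
      using assms(1) by (simp add: nbhd_def)
    moreover have "sum f (nbhd V E v) \<noteq> 0"
      using assms(2) that unfolding w_dominating_2_1_0_iff by fastforce
    ultimately show ?thesis
      by (simp add: sum_eq_0_iff)
  qed
  then show ?thesis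
    using assms(2) unfolding w_dominating_1_0_0_iff[OF assms(1)] w_dominating_2_1_0_iff by blast
qed

lemma w_dominating_2_1_0_decrement:
  assumes "graph V E" and "w_dominating V E [2,1,0] f"
  shows "w_dominating V E [1,0,0] (f(u := f u - 1))"
proof -
  let ?f' = "f(u := f u - 1)"
  have fin: "finite V" and fin_nbhd: "finite (nbhd V E v)" and irrefl: "v \<notin> nbhd V E v" for v
    using assms(1) by (auto simp: graph_def nbhd_def)
  have "1 \<le> sum ?f' (nbhd V E v)" if "v \<in> V" "?f' v = 0" for v
  proof (cases "v = u")
    case True
    then have "sum ?f' (nbhd V E v) = sum f (nbhd V E v)"
      using irrefl[of u] by (intro sum.cong) auto
    moreover have "f v = 0 \<or> f v = 1"
      using that(2) True by auto
    ultimately show ?thesis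
      using assms(2) that(1) unfolding w_dominating_2_1_0_iff by auto
  next
    case False
    then have "2 \<le> sum f (nbhd V E v)"
      using assms(2) that unfolding w_dominating_2_1_0_iff by auto
    then show ?thesis
      using sum_le_sum_decrement_plus_1[OF fin_nbhd, of f v u] by linarith
  qed
  then have "\<exists>z\<in>nbhd V E v. 0 < ?f' z" if "v \<in> V" "?f' v = 0" for v
    using that fin_nbhd[of v] by (metis not_one_le_zero sum_eq_0_iff neq0_conv)
  moreover have "?f' v \<le> 2" if "v \<in> V" for v
    using assms(2) that unfolding w_dominating_2_1_0_iff by auto
  ultimately show ?thesis
    unfolding w_dominating_1_0_0_iff[OF fin] by blast
qed

lemma mem_nbhd_lex_edges:
  "(a, b) \<in> nbhd (V \<times> W) (lex_edges E F) (x, y) \<longleftrightarrow>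
    a \<in> V \<and> b \<in> W \<and> (E x a \<or> (x = a \<and> F y b))"
  by (simp add: nbhd_def lex_edges_def)

lemma w_dominating_lex_fibre_neighbour:
  assumes "finite V" and "finite W" and "w_dominating (V \<times> W) (lex_edges E F) [1,0,0] g"
    and "x \<in> V" and "y \<in> W" and "g (x, y) = 0" and "\<forall>z\<in>nbhd V E x. \<forall>y'\<in>W. g (z, y') = 0"
  shows "\<exists>y'\<in>W. F y y' \<and> 0 < g (x, y')"
proof -
  obtain q where "q \<in> nbhd (V \<times> W) (lex_edges E F) (x, y)" "0 < g q"
    using assms(3-6)
    unfolding w_dominating_1_0_0_iff[OF finite_cartesian_product[OF assms(1,2)]] by blast
  moreover obtain a b where "q = (a, b)"
    by fastforce
  ultimately have q: "(a, b) \<in> nbhd (V \<times> W) (lex_edges E F) (x, y)" "0 < g (a, b)"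
    by simp_all
  then have "\<not> E x a"
    using assms(7) by (auto simp: mem_nbhd_lex_edges nbhd_def)
  then show ?thesis
    using q by (auto simp: mem_nbhd_lex_edges)
qed

definition lift_at :: "'b \<Rightarrow> ('a \<Rightarrow> nat) \<Rightarrow> 'a \<times> 'b \<Rightarrow> nat" where
  "lift_at h f p = (if snd p = h then f (fst p) else 0)"

lemma weight_lift_at:
  assumes "finite W" and "h \<in> W"
  shows "weight (V \<times> W) (lift_at h f) = weight V f"
proof -
  have "weight (V \<times> W) (lift_at h f) = (\<Sum>x\<in>V. \<Sum>y\<in>W. lift_at h f (x, y))"
    by (simp add: weight_def sum.cartesian_product)
  also have "\<dots> = weight V f"
    using assms by (simp add: weight_def lift_at_def)
  finally show ?thesis .
qed

lemma lift_at_w_dominating: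
  assumes "finite V" and "finite W" and "h \<in> W" and "\<forall>y\<in>W. y \<noteq> h \<longrightarrow> F y h"
    and "w_dominating V E [1,0,0] f"
  shows "w_dominating (V \<times> W) (lex_edges E F) [1,0,0] (lift_at h f)"
proof -
  have "\<exists>q\<in>nbhd (V \<times> W) (lex_edges E F) (x, y). 0 < lift_at h f q"
    if xy: "x \<in> V" "y \<in> W" "lift_at h f (x, y) = 0" for x y
  proof (cases "f x = 0")
    case True
    then obtain x' where "x' \<in> V" "E x x'" "0 < f x'"
      using assms(5) xy(1) unfolding w_dominating_1_0_0_iff[OF assms(1)] nbhd_def by auto
    then show ?thesis
      using assms(3) by (intro bexI[of _ "(x', h)"]) (auto simp: mem_nbhd_lex_edges lift_at_def)
  next
    case False
    then have "y \<noteq> h"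
      using xy(3) by (auto simp: lift_at_def)
    then show ?thesis
      using False xy(1,2) assms(3,4)
      by (intro bexI[of _ "(x, h)"]) (auto simp: mem_nbhd_lex_edges lift_at_def)
  qed
  moreover have "lift_at h f p \<le> 2" if "p \<in> V \<times> W" for p
    using assms(5) that unfolding w_dominating_1_0_0_iff[OF assms(1)] lift_at_def by auto
  ultimately show ?thesis
    unfolding w_dominating_1_0_0_iff[OF finite_cartesian_product[OF assms(1,2)]] by auto
qed

lemma lift_at_decrement_le_move:
  assumes "lift_at h f t = 0"
  shows "lift_at h (f(u := f u - 1)) p \<le> move (lift_at h f) (u, h) t p"
  using assms by (auto simp: lift_at_def move_def)

lemma lift_at_secure_w_dominating:
  assumes "graph V E" and "finite W" and "h \<in> W" and "\<forall>y\<in>W. y \<noteq> h \<longrightarrow> F y h"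
    and "w_dominating V E [2,1,0] f"
  shows "secure_w_dominating (V \<times> W) (lex_edges E F) [1,0,0] (lift_at h f)"
proof -
  let ?g = "lift_at h f"
  have fin: "finite V"
    using assms(1) by (simp add: graph_def)
  have f_le_2: "f x \<le> 2" if "x \<in> V" for x
    using assms(5) that unfolding w_dominating_2_1_0_iff by blast
  have move_dominating: "w_dominating (V \<times> W) (lex_edges E F) [1,0,0] (move ?g (u, h) t)"
    if "u \<in> V" and "?g t = 0" for u t
  proof (rule w_dominating_1_0_0_mono)
    show "w_dominating (V \<times> W) (lex_edges E F) [1,0,0] (lift_at h (f(u := f u - 1)))"
      using fin assms(2-4) w_dominating_2_1_0_decrement[OF assms(1,5)]
      by (rule lift_at_w_dominating)
    show "lift_at h (f(u := f u - 1)) p \<le> move ?g (u, h) t p" for p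
      using that(2) by (rule lift_at_decrement_le_move)
    show "move ?g (u, h) t p \<le> 2" if "p \<in> V \<times> W" for p
      using that f_le_2 by (auto simp: move_def lift_at_def intro: le_trans[OF diff_le_self])
  qed (use fin assms(2) in simp)
  have "\<exists>q\<in>nbhd (V \<times> W) (lex_edges E F) (x, y). 0 < ?g q \<and>
      w_dominating (V \<times> W) (lex_edges E F) [1,0,0] (move ?g q (x, y))"
    if xy: "x \<in> V" "y \<in> W" "?g (x, y) = 0" for x y
  proof (cases "f x = 0")
    case True
    then obtain x' where "x' \<in> V" "E x x'" "0 < f x'"
      using w_dominating_2_1_0_imp_1_0_0[OF fin assms(5)] xy(1)
      unfolding w_dominating_1_0_0_iff[OF fin] nbhd_def by auto
    then show ?thesis
      using assms(3) move_dominating xy(3)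
      by (intro bexI[of _ "(x', h)"]) (auto simp: mem_nbhd_lex_edges lift_at_def)
  next
    case False
    then have "y \<noteq> h"
      using xy(3) by (auto simp: lift_at_def)
    then show ?thesis
      using False xy assms(3,4) move_dominating
      by (intro bexI[of _ "(x, h)"]) (auto simp: mem_nbhd_lex_edges lift_at_def)
  qed
  moreover have "w_dominating (V \<times> W) (lex_edges E F) [1,0,0] ?g"
    using fin assms(2-4) w_dominating_2_1_0_imp_1_0_0[OF fin assms(5)]
    by (rule lift_at_w_dominating)
  ultimately show ?thesis
    unfolding secure_w_dominating_def by auto
qed

definition collapse :: "'b set \<Rightarrow> ('a \<times> 'b \<Rightarrow> nat) \<Rightarrow> 'a \<Rightarrow> nat" where
  "collapse W g x = min 2 (\<Sum>y\<in>W. g (x, y))"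

lemma weight_collapse_le: "weight V (collapse W g) \<le> weight (V \<times> W) g"
proof -
  have "weight V (collapse W g) \<le> (\<Sum>x\<in>V. \<Sum>y\<in>W. g (x, y))"
    unfolding weight_def collapse_def by (rule sum_mono) simp
  also have "\<dots> = weight (V \<times> W) g"
    by (simp add: weight_def sum.cartesian_product)
  finally show ?thesis .
qed

lemma collapse_eq_0_iff:
  assumes "finite W"
  shows "collapse W g x = 0 \<longleftrightarrow> (\<forall>y\<in>W. g (x, y) = 0)"
proof -
  have "min 2 s = 0 \<longleftrightarrow> s = 0" for s :: nat
    by (simp add: min_def)
  then show ?thesis
    using assms by (simp add: collapse_def)
qed

lemma collapse_sum_le_1_imp_unique:
  assumes "finite N" and "finite W" and "x \<in> N" and "y \<in> W" and "0 < g (x, y)"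
    and "sum (collapse W g) N \<le> 1"
  shows "g (x, y) = 1 \<and> (\<forall>z\<in>N. \<forall>y'\<in>W. (z, y') \<noteq> (x, y) \<longrightarrow> g (z, y') = 0)"
proof -
  have "g (x, y) \<le> (\<Sum>y'\<in>W. g (x, y'))"
    by (rule member_le_sum) (use assms(2,4) in auto)
  then have "0 < collapse W g x"
    using assms(5) by (simp add: collapse_def)
  then have x_unique: "collapse W g x = 1 \<and> (\<forall>z\<in>N. z \<noteq> x \<longrightarrow> collapse W g z = 0)"
    by (rule sum_le_1_imp_unique[OF assms(1,3) _ assms(6)])
  then have "(\<Sum>y'\<in>W. g (x, y')) \<le> 1"
    by (simp add: collapse_def min_def split: if_splits)
  then have y_unique: "g (x, y) = 1 \<and> (\<forall>y'\<in>W. y' \<noteq> y \<longrightarrow> g (x, y') = 0)"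
    using sum_le_1_imp_unique[of W y "\<lambda>y'. g (x, y')"] assms(2,4,5) by blast
  have "g (z, y') = 0" if "z \<in> N" "y' \<in> W" "(z, y') \<noteq> (x, y)" for z y'
  proof (cases "z = x")
    case True
    then show ?thesis
      using y_unique that by auto
  next
    case False
    then have "collapse W g z = 0"
      using x_unique that(1) by blast
    then show ?thesis
      using that(2) unfolding collapse_eq_0_iff[OF assms(2)] by blast
  qed
  then show ?thesis
    using y_unique by blast
qed

lemma collapse_eq_0_imp_two_le_sum:
  assumes "graph V E" and "finite W" and "\<not> complete_graph W F"
    and "secure_w_dominating (V \<times> W) (lex_edges E F) [1,0,0] g"
    and "x \<in> V" and "collapse W g x = 0"
  shows "2 \<le> sum (collapse W g) (nbhd V E x)"
proof (rule ccontr)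
  assume "\<not> 2 \<le> sum (collapse W g) (nbhd V E x)"
  then have small: "sum (collapse W g) (nbhd V E x) \<le> 1"
    by simp
  have fin: "finite V" and fin_nbhd: "finite (nbhd V E x)" and x_notin: "x \<notin> nbhd V E x"
    using assms(1) by (auto simp: graph_def nbhd_def)
  obtain b a where b: "b \<in> W" and a: "a \<in> W" "a \<noteq> b" "\<not> F b a"
    using assms(3) unfolding complete_graph_def by blast
  have g_x: "\<forall>y\<in>W. g (x, y) = 0"
    using assms(6) unfolding collapse_eq_0_iff[OF assms(2)] .
  obtain u where u: "u \<in> nbhd (V \<times> W) (lex_edges E F) (x, a)" "0 < g u"
    and moved: "w_dominating (V \<times> W) (lex_edges E F) [1,0,0] (move g u (x, a))"
    using assms(4,5) a(1) g_x unfolding secure_w_dominating_def by blast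
  obtain x' y' where u_eq: "u = (x', y')"
    by fastforce
  have "x' \<in> V" "E x x'" and y': "y' \<in> W"
    using u g_x unfolding u_eq mem_nbhd_lex_edges by auto
  then have x': "x' \<in> nbhd V E x"
    by (simp add: nbhd_def)
  then have "x' \<noteq> x"
    using x_notin by blast
  have u_unique: "\<forall>z\<in>nbhd V E x. \<forall>y\<in>W. (z, y) \<noteq> (x', y') \<longrightarrow> g (z, y) = 0"
    and "g (x', y') = 1"
    using collapse_sum_le_1_imp_unique[OF fin_nbhd assms(2) x' y' _ small] u(2)
    unfolding u_eq by blast+
  let ?g' = "move g (x', y') (x, a)"
  have "\<forall>z\<in>nbhd V E x. \<forall>y\<in>W. ?g' (z, y) = 0"
    using u_unique \<open>g (x', y') = 1\<close> x_notin by (auto simp: move_def)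
  moreover have "?g' (x, b) = 0"
    using a b g_x \<open>x' \<noteq> x\<close> by (auto simp: move_def)
  ultimately obtain y where "y \<in> W" "F b y" "0 < ?g' (x, y)"
    using w_dominating_lex_fibre_neighbour[OF fin assms(2) moved[unfolded u_eq] assms(5) b]
    by blast
  then show False
    using a(3) g_x \<open>x' \<noteq> x\<close> by (auto simp: move_def split: if_splits)
qed

lemma secure_lex_fibre_unit_imp_universal:
  assumes "graph V E" and "finite W"
    and "secure_w_dominating (V \<times> W) (lex_edges E F) [1,0,0] g"
    and "x \<in> V" and vanish: "\<forall>z\<in>nbhd V E x. \<forall>y\<in>W. g (z, y) = 0"
    and "y0 \<in> W" and "g (x, y0) = 1" and "\<forall>y\<in>W. y \<noteq> y0 \<longrightarrow> g (x, y) = 0"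
    and "y \<in> W" and "y \<noteq> y0"
  shows "F y y0 \<and> (\<forall>y'\<in>W. y' \<noteq> y \<and> y' \<noteq> y0 \<longrightarrow> F y' y)"
proof -
  have fin: "finite V" and x_notin: "x \<notin> nbhd V E x"
    using assms(1) by (auto simp: graph_def nbhd_def)
  obtain u where u: "u \<in> nbhd (V \<times> W) (lex_edges E F) (x, y)" "0 < g u"
    and moved: "w_dominating (V \<times> W) (lex_edges E F) [1,0,0] (move g u (x, y))"
    using assms(3,4,8-10) unfolding secure_w_dominating_def by blast
  obtain u1 u2 where u_eq: "u = (u1, u2)"
    by fastforce
  have "u1 = x" and "F y u2" and "u2 \<in> W"
    using u vanish unfolding u_eq mem_nbhd_lex_edges by (auto simp: nbhd_def)
  then have "u2 = y0"
    using u(2) assms(8) unfolding u_eq by auto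
  have "F y' y" if y': "y' \<in> W" "y' \<noteq> y" "y' \<noteq> y0" for y'
  proof -
    let ?g' = "move g (x, y0) (x, y)"
    have "\<forall>z\<in>nbhd V E x. \<forall>y''\<in>W. ?g' (z, y'') = 0"
      using vanish x_notin by (auto simp: move_def)
    moreover have "?g' (x, y') = 0"
      using y' assms(8) by (auto simp: move_def)
    moreover have "w_dominating (V \<times> W) (lex_edges E F) [1,0,0] ?g'"
      using moved unfolding u_eq \<open>u1 = x\<close> \<open>u2 = y0\<close> .
    ultimately obtain y'' where "y'' \<in> W" "F y' y''" "0 < ?g' (x, y'')"
      using w_dominating_lex_fibre_neighbour[OF fin assms(2) _ assms(4) y'(1)] by blast
    then show "F y' y"
      using assms(7,8) by (auto simp: move_def split: if_splits)
  qed
  then show ?thesis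
    using \<open>F y u2\<close> \<open>u2 = y0\<close> by blast
qed

lemma collapse_eq_1_imp_one_le_sum:
  assumes "graph V E" and "graph W F" and "\<not> complete_graph W F"
    and "secure_w_dominating (V \<times> W) (lex_edges E F) [1,0,0] g"
    and "x \<in> V" and "collapse W g x = 1"
  shows "1 \<le> sum (collapse W g) (nbhd V E x)"
proof (rule ccontr)
  assume "\<not> 1 \<le> sum (collapse W g) (nbhd V E x)"
  then have sum_0: "sum (collapse W g) (nbhd V E x) = 0"
    by simp
  have fin_W: "finite W" and fin_nbhd: "finite (nbhd V E x)"
    and F_sym: "\<And>a b. F a b \<Longrightarrow> F b a"
    using assms(1,2) by (auto simp: graph_def nbhd_def)
  have vanish: "\<forall>z\<in>nbhd V E x. \<forall>y\<in>W. g (z, y) = 0"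
    using sum_0 unfolding sum_eq_0_iff[OF fin_nbhd] collapse_eq_0_iff[OF fin_W] .
  have "(\<Sum>y\<in>W. g (x, y)) = 1"
    using assms(6) by (simp add: collapse_def min_def split: if_splits)
  then obtain y0 where y0: "y0 \<in> W" "g (x, y0) = 1" "\<forall>y\<in>W. y \<noteq> y0 \<longrightarrow> g (x, y) = 0"
    using sum_eq_1_iff[OF fin_W] by metis
  note universal = secure_lex_fibre_unit_imp_universal[OF assms(1) fin_W assms(4,5) vanish y0]
  have "complete_graph W F"
    unfolding complete_graph_def
  proof (intro ballI impI)
    fix a b
    assume "a \<in> W" "b \<in> W" "a \<noteq> b"
    then show "F a b"
      using universal[of a] universal[of b] F_sym by (cases "b = y0") auto
  qed
  then show False
    using assms(3) by contradiction
qed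

lemma collapse_w_dominating:
  assumes "graph V E" and "graph W F" and "\<not> complete_graph W F"
    and "secure_w_dominating (V \<times> W) (lex_edges E F) [1,0,0] g"
  shows "w_dominating V E [2,1,0] (collapse W g)"
proof -
  have "finite W"
    using assms(2) by (simp add: graph_def)
  then show ?thesis
    unfolding w_dominating_2_1_0_iff
    using collapse_eq_0_imp_two_le_sum[OF assms(1) _ assms(3,4)]
      collapse_eq_1_imp_one_le_sum[OF assms]
    by (auto simp: collapse_def)
qed

theorem theorem15:
  fixes V :: "'a set" and E :: "'a \<Rightarrow> 'a \<Rightarrow> bool"
    and W :: "'b set" and F :: "'b \<Rightarrow> 'b \<Rightarrow> bool"
  assumes "graph V E" and "graph W F"
    and "no_isolated V E"
    and "\<not> complete_graph W F"
    and "domination_number W F = 1"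
  shows "secure_w_domination_number (V \<times> W) (lex_edges E F) [1, 0, 0]
           = w_domination_number V E [2, 1, 0]"
proof -
  have fin_W: "finite W"
    using assms(2) by (simp add: graph_def)
  obtain h where h: "h \<in> W" "\<forall>y\<in>W. y \<noteq> h \<longrightarrow> F y h"
    using domination_number_eq_1_imp_universal[OF assms(5)] by blast
  have "w_domination_number V E [2, 1, 0]
      = secure_w_domination_number (V \<times> W) (lex_edges E F) [1, 0, 0]"
    unfolding w_domination_number_def secure_w_domination_number_def
  proof (rule Least_weight_eq_if_mutually_bounded)
    show "w_dominating V E [2, 1, 0] (\<lambda>_. 2)"
      by (simp add: w_dominating_def)
    show "\<exists>g. secure_w_dominating (V \<times> W) (lex_edges E F) [1, 0, 0] g \<and>
        weight (V \<times> W) g \<le> weight V f" if "w_dominating V E [2, 1, 0] f" for f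
      using lift_at_secure_w_dominating[where F = F, OF assms(1) fin_W h that]
        weight_lift_at[OF fin_W h(1)]
      by (metis order_refl)
    show "\<exists>f. w_dominating V E [2, 1, 0] f \<and> weight V f \<le> weight (V \<times> W) g"
      if "secure_w_dominating (V \<times> W) (lex_edges E F) [1, 0, 0] g" for g
      using collapse_w_dominating[OF assms(1,2,4) that] weight_collapse_le by blast
  qed
  then show ?thesis
    by simp
qed

end
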